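(* Let $\mathbf{u}=(u_1,\dots,u_n)$ be a utility profile over $C$, let $R\in\{R^C,R^V\}$, and suppose that $W(\mathbf{a})=\{c_j\}$ for some $c_j\in C$, where $\mathbf{a}$ is the truthful ballot vector. Then $\mathbf{a}$ is a PNE of the game $G=(\mathcal{T},R,\mathbf{u})$ if and only if for every $i\in N$ and every $c_k\in H(\mathbf{a})\setminus\{a_i\}$ it holds that $c_j\succ_i c_k$.
   Context: Let $C=\{c_1,\dots,c_m\}$ be candidates and $N=\{1,\dots,n\}$ voters, each with an injective utility function $u_i:C\to\mathbb{N}$ inducing $c\succ_i c'$ iff $u_i(c)>u_i(c')$; $a_i$ is $i$'s top candidate and $\mathbf{a}=(a_1,\dots,a_n)$. A ballot vector is $\mathbf{b}=(b_1,\dots,b_n)$ with $b_i\in C\cup\{\bot\}$ ($\bot$ = abstain); $(\mathbf{b}_{-i},b')$ replaces $b_i$ by $b'$. $\mathrm{sc}(c,\mathbf{b})=|\{i:b_i=c\}|$, $M(\mathbf{b})=\max_c\mathrm{sc}(c,\mathbf{b})$, $W(\mathbf{b})=\{c:\mathrm{sc}(c,\mathbf{b})=M(\mathbf{b})\}$, $H(\mathbf{b})=\{c:\mathrm{sc}(c,\mathbf{b})=M(\mathbf{b})-1\}$. If $|W(\mathbf{b})|=1$ its element wins; otherwise under $R^C$ the winner is uniform on $W(\mathbf{b})$, and under $R^V$ a uniformly random voter $i\in N$ is chosen and the winner is $b_i$ if $b_i\in W(\mathbf{b})$, else $i$'s most preferred candidate in $W(\mathbf{b})$. Let $p_j(\mathbf{b})$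 be the probability $c_j$ wins. Fix $0<\varepsilon<\min\{1/m,1/n\}$. In the truth-biased setting $\mathcal{T}$, voter $i$'s utility is $U_i(\mathbf{b})=\sum_jp_j(\mathbf{b})u_i(c_j)$ if $b_i\in C\setminus\{a_i\}$, that plus $\varepsilon$ if $b_i=a_i$, and $-\infty$ if $b_i=\bot$. The game $(\mathcal{T},R,\mathbf{u})$ has players $N$ with action sets $C\cup\{\bot\}$; a PNE is a ballot vector $\mathbf{b}$ with $U_i(\mathbf{b})\ge U_i(\mathbf{b}_{-i},b')$ for all $i$ and $b'$. *)

theory Defs
  imports Complex_Main "HOL-Library.Extended_Real"
begin

text \<open>Voters are a finite set N of type 'v, candidates a finite set C of type 'c.
  A ballot vector is b :: 'v => 'c option, None = abstain (bottom).
  Utilities u :: 'v => 'c => nat.\<close>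

datatype tie_rule = RC | RV

definition sc :: "'v set \<Rightarrow> ('v \<Rightarrow> 'c option) \<Rightarrow> 'c \<Rightarrow> nat" where
  "sc N b c = card {i \<in> N. b i = Some c}"

definition maxsc :: "'c set \<Rightarrow> 'v set \<Rightarrow> ('v \<Rightarrow> 'c option) \<Rightarrow> nat" where
  "maxsc C N b = Max (sc N b ` C)"

definition Wset :: "'c set \<Rightarrow> 'v set \<Rightarrow> ('v \<Rightarrow> 'c option) \<Rightarrow> 'c set" where
  "Wset C N b = {c \<in> C. sc N b c = maxsc C N b}"

definition Hset :: "'c set \<Rightarrow> 'v set \<Rightarrow> ('v \<Rightarrow> 'c option) \<Rightarrow> 'c set" where
  "Hset C N b = {c \<in> C. int (sc N b c) = int (maxsc C N b) - 1}"

definition fav :: "('v \<Rightarrow> 'c \<Rightarrow> nat) \<Rightarrow> 'v \<Rightarrow> 'c set \<Rightarrow> 'c" where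
  "fav u i S = (THE c. c \<in> S \<and> (\<forall>c' \<in> S. u i c' \<le> u i c))"

definition top :: "('v \<Rightarrow> 'c \<Rightarrow> nat) \<Rightarrow> 'c set \<Rightarrow> 'v \<Rightarrow> 'c" where
  "top u C i = fav u i C"

definition truthful :: "('v \<Rightarrow> 'c \<Rightarrow> nat) \<Rightarrow> 'c set \<Rightarrow> 'v \<Rightarrow> 'c option" where
  "truthful u C = (\<lambda>i. Some (top u C i))"

text \<open>Under R^V: winner when voter i is drawn.\<close>
definition rv_choice :: "('v \<Rightarrow> 'c \<Rightarrow> nat) \<Rightarrow> 'c set \<Rightarrow> 'v set \<Rightarrow> ('v \<Rightarrow> 'c option) \<Rightarrow> 'v \<Rightarrow> 'c" where
  "rv_choice u C N b i =
     (case b i of Some c \<Rightarrow> if c \<in> Wset C N b then c else fav u i (Wset C N b)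
                | None \<Rightarrow> fav u i (Wset C N b))"

definition win_prob :: "tie_rule \<Rightarrow> ('v \<Rightarrow> 'c \<Rightarrow> nat) \<Rightarrow> 'c set \<Rightarrow> 'v set \<Rightarrow> ('v \<Rightarrow> 'c option) \<Rightarrow> 'c \<Rightarrow> real" where
  "win_prob R u C N b c =
     (if card (Wset C N b) = 1 then (if c \<in> Wset C N b then 1 else 0)
      else (case R of
              RC \<Rightarrow> (if c \<in> Wset C N b then 1 / real (card (Wset C N b)) else 0)
            | RV \<Rightarrow> real (card {i \<in> N. rv_choice u C N b i = c}) / real (card N)))"

definition exp_util :: "tie_rule \<Rightarrow> ('v \<Rightarrow> 'c \<Rightarrow> nat) \<Rightarrow> 'c set \<Rightarrow> 'v set \<Rightarrow> ('v \<Rightarrow> 'c option) \<Rightarrow> 'v \<Rightarrow> real" where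
  "exp_util R u C N b i = (\<Sum>c\<in>C. win_prob R u C N b c * real (u i c))"

definition tb_util :: "real \<Rightarrow> tie_rule \<Rightarrow> ('v \<Rightarrow> 'c \<Rightarrow> nat) \<Rightarrow> 'c set \<Rightarrow> 'v set \<Rightarrow> ('v \<Rightarrow> 'c option) \<Rightarrow> 'v \<Rightarrow> ereal" where
  "tb_util eps R u C N b i =
     (case b i of None \<Rightarrow> -\<infinity>
        | Some c \<Rightarrow> ereal (exp_util R u C N b i + (if c = top u C i then eps else 0)))"

definition is_PNE :: "real \<Rightarrow> tie_rule \<Rightarrow> ('v \<Rightarrow> 'c \<Rightarrow> nat) \<Rightarrow> 'c set \<Rightarrow> 'v set \<Rightarrow> ('v \<Rightarrow> 'c option) \<Rightarrow> bool" where
  "is_PNE eps R u C N b \<longleftrightarrow>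
     (\<forall>i \<in> N. \<forall>b' \<in> Some ` C \<union> {None}.
        tb_util eps R u C N (b(i := b')) i \<le> tb_util eps R u C N b i)"

end

theory Submission
  imports Defs
begin

text \<open>Truthfully, voter \<open>i\<close> obtains \<open>u\<^sub>i(c\<^sub>j) + \<epsilon>\<close>. Abstaining yields \<open>-\<infinity>\<close>, and any
  other deviation forfeits \<open>\<epsilon>\<close> while moving one vote from \<open>a\<^sub>i\<close> to some \<open>c\<close>. If \<open>a\<^sub>i = c\<^sub>j\<close>,
  no candidate \<open>i\<close> prefers to \<open>c\<^sub>j\<close> can win; otherwise the new winner set is \<open>{c\<^sub>j, c}\<close> when
  \<open>c\<close> lies in \<open>H(a)\<close> and differs from \<open>a\<^sub>i\<close>, and \<open>{c\<^sub>j}\<close> otherwise. So if \<open>i\<close> ranks \<open>c\<^sub>j\<close>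
  above every such \<open>c\<close>, every possible winner is worth at most \<open>u\<^sub>i(c\<^sub>j)\<close> and no deviation pays.
  Conversely, if \<open>i\<close> prefers such a \<open>c\<close> to \<open>c\<^sub>j\<close>, voting for \<open>c\<close> creates the tie \<open>{c\<^sub>j, c}\<close>,
  which gains at least \<open>1/2\<close> under \<open>R\<^sup>C\<close> and at least \<open>1/n\<close> under \<open>R\<^sup>V\<close> (the lottery draws \<open>i\<close>,
  who now votes \<open>c\<close>, with probability \<open>1/n\<close>); both exceed \<open>\<epsilon>\<close>.\<close>

section \<open>Favourite candidates\<close>

lemma fav_mem_maximal:
  assumes "finite S" "S \<noteq> {}" "inj_on (u i) S"
  shows "fav u i S \<in> S" and "\<And>c. c \<in> S \<Longrightarrow> u i c \<le> u i (fav u i S)"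
proof -
  have "Max (u i ` S) \<in> u i ` S"
    using assms(1,2) by simp
  then obtain c where c: "c \<in> S" "u i c = Max (u i ` S)"
    by auto
  have c_max: "\<forall>c'\<in>S. u i c' \<le> u i c"
    using c assms(1) by simp
  have "fav u i S = c"
    unfolding fav_def
  proof (rule the_equality)
    fix x assume "x \<in> S \<and> (\<forall>c'\<in>S. u i c' \<le> u i x)"
    with c c_max assms(3) show "x = c"
      by (meson inj_onD le_antisym)
  qed (use c c_max in simp)
  with c c_max show "fav u i S \<in> S" "\<And>c'. c' \<in> S \<Longrightarrow> u i c' \<le> u i (fav u i S)"
    by simp_all
qed

lemma top_mem_maximal:
  assumes "finite C" "C \<noteq> {}" "inj_on (u i) C"
  shows "top u C i \<in> C" and "\<And>c. c \<in> C \<Longrightarrow> u i c \<le> u i (top u C i)"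
  unfolding top_def using fav_mem_maximal[of C u i, OF assms] by simp_all

section \<open>Scores and winner sets\<close>

lemma sc_fun_upd_Some:
  assumes "finite N" "i \<in> N"
  shows "int (sc N (b(i := Some c)) d)
    = int (sc N b d) - (if b i = Some d then 1 else 0) + (if c = d then 1 else 0)"
proof -
  have split: "card {k \<in> N. P k} = card {k \<in> N - {i}. P k} + (if P i then 1 else 0)" for P
  proof -
    have "{k \<in> N. P k} = (if P i then insert i {k \<in> N - {i}. P k} else {k \<in> N - {i}. P k})"
      using assms(2) by auto
    then show ?thesis
      using assms(1) by simp
  qed
  have "{k \<in> N - {i}. (b(i := Some c)) k = Some d} = {k \<in> N - {i}. b k = Some d}"
    by auto
  then show ?thesis
    unfolding sc_def using split[of "\<lambda>k. (b(i := Some c)) k = Some d"] split[of "\<lambda>k. b k = Some d"]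
    by simp
qed

lemma sc_le_maxsc: "finite C \<Longrightarrow> d \<in> C \<Longrightarrow> sc N b d \<le> maxsc C N b"
  unfolding maxsc_def by simp

lemma Wset_subset: "Wset C N b \<subseteq> C"
  unfolding Wset_def by auto

lemma Hset_subset: "Hset C N b \<subseteq> C"
  unfolding Hset_def by auto

lemma Wset_Hset_disjoint: "Wset C N b \<inter> Hset C N b = {}"
  unfolding Wset_def Hset_def by auto

lemma Wset_nonempty:
  assumes "finite C" "C \<noteq> {}"
  shows "Wset C N b \<noteq> {}"
proof -
  have "maxsc C N b \<in> sc N b ` C"
    unfolding maxsc_def using assms by simp
  then show ?thesis
    unfolding Wset_def by auto
qed

lemma sc_lt_maxsc_unique_winner:
  assumes "finite C" "Wset C N b = {w}" "d \<in> C" "d \<noteq> w"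
  shows "sc N b d < maxsc C N b"
proof -
  have "d \<notin> Wset C N b"
    using assms(2,4) by simp
  then show ?thesis
    using sc_le_maxsc[OF assms(1,3), of N b] assms(3) unfolding Wset_def by simp
qed

lemma Wset_eqI:
  assumes "finite C" "S \<subseteq> C" "S \<noteq> {}"
    and "\<And>d. d \<in> S \<Longrightarrow> sc N b d = m" and "\<And>d. d \<in> C - S \<Longrightarrow> sc N b d < m"
  shows "Wset C N b = S"
proof -
  obtain s where "s \<in> S"
    using assms(3) by blast
  then have "maxsc C N b = m"
    unfolding maxsc_def using assms
    by (intro Max_eqI) (auto intro: less_imp_le)
  then show ?thesis
    unfolding Wset_def using assms(2,4,5) by fastforce
qed

lemma Wset_fun_upd_unique_winner:
  assumes "finite C" "finite N" "i \<in> N" "Wset C N b = {w}" "b i = Some t" "t \<noteq> w" "c \<in> C"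
  shows "Wset C N (b(i := Some c)) = (if c \<in> Hset C N b - {t} then {w, c} else {w})"
proof -
  define M where "M = maxsc C N b"
  let ?b' = "b(i := Some c)"
  have w: "w \<in> C" "sc N b w = M"
    using assms(4) unfolding Wset_def M_def by auto
  have below: "int (sc N b d) < int M" if "d \<in> C" "d \<noteq> w" for d
    using sc_lt_maxsc_unique_winner[OF assms(1,4) that] unfolding M_def by simp
  have upd: "int (sc N ?b' d) = int (sc N b d) - (if t = d then 1 else 0) + (if c = d then 1 else 0)" for d
    using sc_fun_upd_Some[OF assms(2,3), of b c d] assms(5) by simp
  have upd_w: "sc N ?b' w = M + (if c = w then 1 else 0)"
    using upd[of w] w(2) assms(6) by (auto split: if_splits)
  have H: "c \<in> Hset C N b \<longleftrightarrow> int (sc N b c) = int M - 1"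
    unfolding Hset_def M_def using assms(7) by simp
  have others: "int (sc N ?b' d) < int M" if "d \<in> C" "d \<noteq> w" "d \<noteq> c" for d
    using upd[of d] below[OF that(1,2)] that(3) by simp
  show ?thesis
  proof (cases "c \<in> Hset C N b - {t}")
    case True
    then have cw: "c \<noteq> w" and "int (sc N b c) = int M - 1" "c \<noteq> t"
      using H w(2) by auto
    then have tie: "sc N ?b' c = sc N ?b' w"
      using upd[of c] upd_w by simp
    have "Wset C N ?b' = {w, c}"
    proof (rule Wset_eqI[OF assms(1), where m = "sc N ?b' w"])
      show "{w, c} \<subseteq> C"
        using w(1) assms(7) by simp
      show "sc N ?b' d = sc N ?b' w" if "d \<in> {w, c}" for d
        using that tie by auto
      show "sc N ?b' d < sc N ?b' w" if "d \<in> C - {w, c}" for d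
        using that others[of d] upd_w cw by simp
    qed simp
    with True show ?thesis
      by simp
  next
    case False
    have "sc N ?b' d < sc N ?b' w" if "d \<in> C" "d \<noteq> w" for d
    proof (cases "d = c")
      case True
      with False H that have "d = t \<or> int (sc N b d) \<noteq> int M - 1"
        by auto
      then have "int (sc N ?b' d) < int M"
        using upd[of d] below[OF that] True by auto
      then show ?thesis
        using upd_w by simp
    next
      case False
      then show ?thesis
        using others[OF that False] upd_w by (simp split: if_splits)
    qed
    then have "Wset C N ?b' = {w}"
      using w(1) by (intro Wset_eqI[OF assms(1)]) auto
    with False show ?thesis
      by auto
  qed
qed

lemma rv_choice_in_Wset:
  assumes "finite C" "C \<noteq> {}" "inj_on (u k) C"
  shows "rv_choice u C N b k \<in> Wset C N b"
proof -
  have "fav u k (Wset C N b) \<in> Wset C N b"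
    using fav_mem_maximal(1)[of "Wset C N b" u k, OF finite_subset[OF Wset_subset assms(1)]
        Wset_nonempty[OF assms(1,2)] inj_on_subset[OF assms(3) Wset_subset]] .
  then show ?thesis
    unfolding rv_choice_def by (simp split: option.split)
qed

section \<open>Expected utility\<close>

lemma exp_util_unique_winner:
  assumes "finite C" "Wset C N b = {w}"
  shows "exp_util R u C N b i = real (u i w)"
proof -
  have "w \<in> C"
    using assms(2) Wset_subset[of C N b] by blast
  have "exp_util R u C N b i = (\<Sum>c\<in>C. if c = w then real (u i c) else 0)"
    unfolding exp_util_def win_prob_def using assms by (intro sum.cong) auto
  also have "\<dots> = real (u i w)"
    using assms(1) \<open>w \<in> C\<close> by (simp add: sum.delta')
  finally show ?thesis .
qed

lemma exp_util_RC_tie: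
  assumes "finite C" "card (Wset C N b) \<noteq> 1"
  shows "exp_util RC u C N b i = (\<Sum>c\<in>Wset C N b. real (u i c)) / real (card (Wset C N b))"
proof -
  have "exp_util RC u C N b i
      = (\<Sum>c\<in>C. if c \<in> Wset C N b then real (u i c) / real (card (Wset C N b)) else 0)"
    unfolding exp_util_def win_prob_def using assms(2) by (intro sum.cong) auto
  also have "\<dots> = (\<Sum>c\<in>C \<inter> Wset C N b. real (u i c) / real (card (Wset C N b)))"
    by (rule sum.inter_restrict[OF assms(1), symmetric])
  also have "C \<inter> Wset C N b = Wset C N b"
    using Wset_subset[of C N b] by blast
  finally show ?thesis
    by (simp add: sum_divide_distrib)
qed

lemma exp_util_RV_tie:
  assumes "finite C" "C \<noteq> {}" "finite N" "card (Wset C N b) \<noteq> 1"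
    and "\<And>k. k \<in> N \<Longrightarrow> inj_on (u k) C"
  shows "exp_util RV u C N b i = (\<Sum>k\<in>N. real (u i (rv_choice u C N b k))) / real (card N)"
proof -
  let ?r = "rv_choice u C N b"
  have r_in_C: "?r k \<in> C" if "k \<in> N" for k
    using rv_choice_in_Wset[of C u k N b, OF assms(1,2) assms(5)[OF that]] Wset_subset[of C N b] by blast
  have "exp_util RV u C N b i
      = (\<Sum>c\<in>C. real (card {k \<in> N. ?r k = c}) * real (u i c)) / real (card N)"
    unfolding exp_util_def win_prob_def using assms(4) by (simp add: sum_divide_distrib)
  also have "(\<Sum>c\<in>C. real (card {k \<in> N. ?r k = c}) * real (u i c))
      = (\<Sum>c\<in>C. \<Sum>k\<in>{k \<in> N. ?r k = c}. real (u i (?r k)))"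
    by (intro sum.cong) auto
  also have "\<dots> = (\<Sum>k\<in>N. real (u i (?r k)))"
    using assms(1,3) r_in_C by (intro sum.group) auto
  finally show ?thesis .
qed

lemma exp_util_le_if_winners_le:
  assumes "finite C" "C \<noteq> {}" "finite N" "N \<noteq> {}" "\<And>k. k \<in> N \<Longrightarrow> inj_on (u k) C"
    and "\<And>w. w \<in> Wset C N b \<Longrightarrow> real (u i w) \<le> U"
  shows "exp_util R u C N b i \<le> U"
proof (cases "card (Wset C N b) = 1")
  case True
  then obtain w where "Wset C N b = {w}"
    by (metis card_1_singletonE)
  then show ?thesis
    using exp_util_unique_winner[OF assms(1), of N b w] assms(6) by simp
next
  case False
  show ?thesis
  proof (cases R)
    case RC
    have "card (Wset C N b) > 0"
      using finite_subset[OF Wset_subset[of C N b] assms(1)] Wset_nonempty[OF assms(1,2), of N b] by auto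
    moreover have "(\<Sum>c\<in>Wset C N b. real (u i c)) \<le> real (card (Wset C N b)) * U"
      using sum_mono[of "Wset C N b" "\<lambda>c. real (u i c)" "\<lambda>_. U"] assms(6) by simp
    ultimately show ?thesis
      using exp_util_RC_tie[OF assms(1) False] RC by (simp add: divide_le_eq mult.commute)
  next
    case RV
    have "card N > 0"
      using assms(3,4) by auto
    moreover have "(\<Sum>k\<in>N. real (u i (rv_choice u C N b k))) \<le> real (card N) * U"
      using sum_mono[of N "\<lambda>k. real (u i (rv_choice u C N b k))" "\<lambda>_. U"]
        assms(6) rv_choice_in_Wset[of C u _ N b, OF assms(1,2) assms(5)] by simp
    ultimately show ?thesis
      using exp_util_RV_tie[OF assms(1,2,3) False assms(5)] RV by (simp add: divide_le_eq mult.commute)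
  qed
qed

lemma exp_util_two_winners_ge:
  assumes "finite C" "C \<noteq> {}" "finite N" "i \<in> N" "\<And>k. k \<in> N \<Longrightarrow> inj_on (u k) C"
    and "Wset C N b = {w, w'}" "w \<noteq> w'" "u i w < u i w'" "b i = Some w'"
  shows "real (u i w) + min (1 / 2) (1 / real (card N)) \<le> exp_util R u C N b i"
proof -
  have two: "card (Wset C N b) = 2"
    using assms(6,7) by simp
  have "u i w + 1 \<le> u i w'"
    using assms(8) by simp
  then have gap: "real (u i w) + 1 \<le> real (u i w')"
    by (metis of_nat_1 of_nat_add of_nat_le_iff)
  show ?thesis
  proof (cases R)
    case RC
    then have "exp_util R u C N b i = (real (u i w) + real (u i w')) / 2"
      using exp_util_RC_tie[OF assms(1), of N b u i] two assms(6,7) by simp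
    moreover have "real (u i w) + 1 / 2 \<le> (real (u i w) + real (u i w')) / 2"
      using gap by simp
    ultimately show ?thesis
      using min.cobounded1[of "1 / 2" "1 / real (card N)"] by linarith
  next
    case RV
    let ?d = "\<lambda>k. real (u i (rv_choice u C N b k)) - real (u i w)"
    have d_nonneg: "0 \<le> ?d k" if "k \<in> N" for k
      using rv_choice_in_Wset[of C u k N b, OF assms(1,2) assms(5)[OF that]] assms(6,8) by auto
    have "rv_choice u C N b i = w'"
      unfolding rv_choice_def using assms(6,9) by simp
    then have "1 \<le> ?d i"
      using gap by simp
    also have "?d i \<le> sum ?d N"
      by (rule member_le_sum[OF assms(4) _ assms(3)]) (use d_nonneg in blast)
    finally have sum_ge: "real (card N) * real (u i w) + 1 \<le> (\<Sum>k\<in>N. real (u i (rv_choice u C N b k)))"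
      by (simp add: sum_subtractf)
    have "card N > 0"
      using assms(3,4) card_gt_0_iff by blast
    moreover have "exp_util R u C N b i = (\<Sum>k\<in>N. real (u i (rv_choice u C N b k))) / real (card N)"
      using exp_util_RV_tie[OF assms(1,2,3) _ assms(5), where b = b and i = i] two RV by simp
    ultimately have "real (u i w) + 1 / real (card N) \<le> exp_util R u C N b i"
      using sum_ge by (simp add: field_simps)
    then show ?thesis
      using min.cobounded2[of "1 / real (card N)" "1 / 2"] by linarith
  qed
qed

lemma tb_util_fun_upd_None: "tb_util eps R u C N (b(i := None)) i = -\<infinity>"
  unfolding tb_util_def by simp

lemma tb_util_fun_upd_Some:
  "tb_util eps R u C N (b(i := Some c)) i
    = ereal (exp_util R u C N (b(i := Some c)) i + (if c = top u C i then eps else 0))"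
  unfolding tb_util_def by simp

section \<open>Deviations from the truthful ballot vector\<close>

locale truthful_unique_winner =
  fixes C :: "'c set" and N :: "'v set" and u :: "'v \<Rightarrow> 'c \<Rightarrow> nat" and eps :: real and cj :: 'c
  assumes finite_C: "finite C" and finite_N: "finite N" and N_nonempty: "N \<noteq> {}"
    and inj: "\<And>i. i \<in> N \<Longrightarrow> inj_on (u i) C"
    and eps_pos: "0 < eps" and eps_lt_C: "eps < 1 / real (card C)" and eps_lt_N: "eps < 1 / real (card N)"
    and unique_winner: "Wset C N (truthful u C) = {cj}"
begin

abbreviation a :: "'v \<Rightarrow> 'c option" where
  "a \<equiv> truthful u C"

lemma cj_in_C: "cj \<in> C"
  using unique_winner Wset_subset[of C N a] by blast

lemma C_nonempty: "C \<noteq> {}"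
  using cj_in_C by blast

lemma tb_util_truthful: "tb_util eps R u C N a i = ereal (real (u i cj) + eps)"
  using exp_util_unique_winner[OF finite_C unique_winner, of R u i]
  unfolding tb_util_def by (simp add: truthful_def)

lemma Wset_deviation:
  assumes "i \<in> N" "top u C i \<noteq> cj" "c \<in> C"
  shows "Wset C N (a(i := Some c)) = (if c \<in> Hset C N a - {top u C i} then {cj, c} else {cj})"
  using Wset_fun_upd_unique_winner[OF finite_C finite_N assms(1) unique_winner _ assms(2,3)]
  by (simp add: truthful_def)

lemma deviation_profitable:
  assumes "i \<in> N" "ck \<in> Hset C N a - {top u C i}" "u i cj < u i ck"
  shows "tb_util eps R u C N a i < tb_util eps R u C N (a(i := Some ck)) i"
proof -
  have ck: "ck \<in> C" "ck \<noteq> cj"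
    using assms(2,3) unfolding Hset_def by auto
  have "top u C i \<noteq> cj"
    using top_mem_maximal(2)[of C u i, OF finite_C C_nonempty inj[OF assms(1)] ck(1)] assms(3) by auto
  then have "Wset C N (a(i := Some ck)) = {cj, ck}"
    using Wset_deviation[OF assms(1) _ ck(1)] assms(2) by simp
  then have gain: "real (u i cj) + min (1 / 2) (1 / real (card N)) \<le> exp_util R u C N (a(i := Some ck)) i"
    using exp_util_two_winners_ge[where u = u and i = i and R = R, OF finite_C C_nonempty finite_N
        assms(1) inj] ck(2) assms(3) by simp
  have "2 \<le> card C"
    using card_mono[OF finite_C, of "{cj, ck}"] cj_in_C ck by simp
  then have "1 / real (card C) \<le> 1 / 2"
    by (intro divide_left_mono) auto
  then have "eps < 1 / 2"
    using eps_lt_C by linarith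
  then have "real (u i cj) + eps < exp_util R u C N (a(i := Some ck)) i"
    using gain eps_lt_N by linarith
  then show ?thesis
    using assms(2) by (simp add: tb_util_truthful tb_util_fun_upd_Some)
qed

lemma deviation_unprofitable:
  assumes "i \<in> N" "\<forall>ck \<in> Hset C N a - {top u C i}. u i ck < u i cj" "c \<in> C"
  shows "tb_util eps R u C N (a(i := Some c)) i \<le> tb_util eps R u C N a i"
proof (cases "c = top u C i")
  case True
  then have "a(i := Some c) = a"
    by (auto simp: truthful_def)
  then show ?thesis
    by simp
next
  case False
  have "real (u i w) \<le> real (u i cj)" if "w \<in> Wset C N (a(i := Some c))" for w
  proof (cases "top u C i = cj")
    case True
    then show ?thesis
      using top_mem_maximal(2)[of C u i, OF finite_C C_nonempty inj[OF assms(1)]] that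
        Wset_subset[of C N "a(i := Some c)"] by auto
  next
    case False
    have "w = cj \<or> w \<in> Hset C N a - {top u C i}"
      using that Wset_deviation[OF assms(1) False assms(3)] by (auto split: if_splits)
    then show ?thesis
      using assms(2) by (auto intro: less_imp_le)
  qed
  then have "exp_util R u C N (a(i := Some c)) i \<le> real (u i cj)"
    using exp_util_le_if_winners_le[where u = u and b = "a(i := Some c)" and i = i and R = R,
        OF finite_C C_nonempty finite_N N_nonempty inj] by blast
  then show ?thesis
    using False eps_pos by (simp add: tb_util_truthful tb_util_fun_upd_Some)
qed

end

theorem theorem5:
  fixes C :: "'c set" and N :: "'v set" and u :: "'v \<Rightarrow> 'c \<Rightarrow> nat"
    and R :: tie_rule and eps :: real and cj :: 'c
  assumes "finite C" "C \<noteq> {}" "finite N" "N \<noteq> {}"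
    and "\<And>i. i \<in> N \<Longrightarrow> inj_on (u i) C"
    and "0 < eps" "eps < 1 / real (card C)" "eps < 1 / real (card N)"
    and "cj \<in> C"
    and "Wset C N (truthful u C) = {cj}"
  shows "is_PNE eps R u C N (truthful u C) \<longleftrightarrow>
    (\<forall>i \<in> N. \<forall>ck \<in> Hset C N (truthful u C) - {top u C i}. u i ck < u i cj)"
proof -
  interpret truthful_unique_winner C N u eps cj
    using assms by unfold_locales auto
  show ?thesis
  proof
    assume PNE: "is_PNE eps R u C N a"
    show "\<forall>i \<in> N. \<forall>ck \<in> Hset C N a - {top u C i}. u i ck < u i cj"
    proof (intro ballI)
      fix i ck assume i: "i \<in> N" and ck: "ck \<in> Hset C N a - {top u C i}"
      have "ck \<in> C" "ck \<noteq> cj"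
        using ck Hset_subset[of C N a] Wset_Hset_disjoint[of C N a] unique_winner by auto
      then have "u i ck \<noteq> u i cj"
        using inj[OF i] cj_in_C by (meson inj_onD)
      moreover have "tb_util eps R u C N (a(i := Some ck)) i \<le> tb_util eps R u C N a i"
        using PNE i \<open>ck \<in> C\<close> unfolding is_PNE_def by simp
      then have "\<not> u i cj < u i ck"
        using deviation_profitable[OF i ck, of R] by (meson not_le)
      ultimately show "u i ck < u i cj"
        by simp
    qed
  next
    assume no_better: "\<forall>i \<in> N. \<forall>ck \<in> Hset C N a - {top u C i}. u i ck < u i cj"
    show "is_PNE eps R u C N a"
      unfolding is_PNE_def
    proof (intro ballI)
      fix i b' assume i: "i \<in> N" and b': "b' \<in> Some ` C \<union> {None}"
      then consider "b' = None" | c where "c \<in> C" "b' = Some c"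
        by blast
      then show "tb_util eps R u C N (a(i := b')) i \<le> tb_util eps R u C N a i"
        by cases (simp_all add: tb_util_fun_upd_None deviation_unprofitable[OF i bspec[OF no_better i]])
    qed
  qed
qed

end
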